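(* Let $\Lambda$ be a row-finite $k$-graph with no sources and let $\alpha$ be an action of $\mathbb{Z}^l$ on $\Lambda$ by automorphisms. Then $\Lambda$ is $\alpha$-cofinal if and only if $\Lambda\times_\alpha\mathbb{Z}^l$ is cofinal.
   Context: A $k$-graph is a countable category $\Lambda$ with a functor $d:\Lambda\to\mathbb{N}^k$ with unique factorisation; vertices are degree-$0$ morphisms; $v\Lambda w=\{\lambda:r(\lambda)=v,s(\lambda)=w\}$; row-finite: each $v\Lambda^n$ finite; no sources: each $v\Lambda^n$ nonempty. An automorphism is a bijective degree-preserving functor. $\Lambda\times_\alpha\mathbb{Z}^l$ is the $(k+l)$-graph with morphisms $\Lambda\times\mathbb{N}^l$, degree $(d(\lambda),m)$, $r(\lambda,m)=(r(\lambda),0)$, $s(\lambda,m)=(\alpha_{-m}(s(\lambda)),0)$, $(\mu,m)(\nu,n)=(\mu\alpha_m(\nu),m+n)$. For a $j$-graph $\Gamma$, $\Gamma^\infty$ is the set of degree-preserving functors $x:\Omega_j\to\Gamma$ ($\Omega_j=\{(a,b)\in\mathbb{N}^j\times\mathbb{N}^j:a\le b\}$, $r(a,b)=(a,a)$, $s(a,b)=(b,b)$, $d(a,b)=b-a$), and $x(n):=x(n,n)$. $\Gamma$ (row-finite, no sources) is cofinal if for every $x\in\Gamma^\infty$ and vertex $v$ there is $n$ with $v\Gamma x(n)\ne\emptyset$. $\Lambda$ is $\alpha$-cofinal if for every vertex $v$ and $x\in\Lambda^\infty$ there exist $p\in\mathbb{N}^k$ and $m,n\in\mathbb{N}^l$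 with $\alpha_{-m}(v)\Lambda\alpha_{-n}(x(p))\ne\emptyset$. *)

theory Defs
  imports Main "HOL-Library.Function_Algebras" "HOL-Library.Countable_Set"
begin

text \<open>A k-graph is encoded as a category given by its set of morphisms, range and
 source maps (returning the identity morphism at the range / source object),
 a (partial) composition, and a degree map into N^k, where N^k is represented as
 'k => nat for a finite index type 'k (so k = CARD('k)).\<close>

record ('a, 'k) kgraph =
  Mor :: "'a set"
  rg  :: "'a \<Rightarrow> 'a"
  sr  :: "'a \<Rightarrow> 'a"
  cp  :: "'a \<Rightarrow> 'a \<Rightarrow> 'a"
  dg  :: "'a \<Rightarrow> 'k \<Rightarrow> nat"

definition is_category :: "('a, 'k) kgraph \<Rightarrow> bool" where
  "is_category G \<longleftrightarrow>
     (\<forall>f\<in>Mor G. rg G f \<in> Mor G \<and> sr G f \<in> Mor G) \<and>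
     (\<forall>f\<in>Mor G. rg G (rg G f) = rg G f \<and> sr G (rg G f) = rg G f \<and>
                 rg G (sr G f) = sr G f \<and> sr G (sr G f) = sr G f) \<and>
     (\<forall>f\<in>Mor G. cp G (rg G f) f = f \<and> cp G f (sr G f) = f) \<and>
     (\<forall>f\<in>Mor G. \<forall>g\<in>Mor G. sr G f = rg G g \<longrightarrow>
        cp G f g \<in> Mor G \<and> rg G (cp G f g) = rg G f \<and> sr G (cp G f g) = sr G g) \<and>
     (\<forall>f\<in>Mor G. \<forall>g\<in>Mor G. \<forall>h\<in>Mor G. sr G f = rg G g \<longrightarrow> sr G g = rg G h \<longrightarrow>
        cp G (cp G f g) h = cp G f (cp G g h))"

definition is_kgraph :: "('a, 'k::finite) kgraph \<Rightarrow> bool" where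
  "is_kgraph G \<longleftrightarrow> is_category G \<and> countable (Mor G) \<and>
     (\<forall>f\<in>Mor G. \<forall>g\<in>Mor G. sr G f = rg G g \<longrightarrow> dg G (cp G f g) = dg G f + dg G g) \<and>
     (\<forall>f\<in>Mor G. \<forall>m n. dg G f = m + n \<longrightarrow>
        (\<exists>!p. fst p \<in> Mor G \<and> snd p \<in> Mor G \<and> sr G (fst p) = rg G (snd p) \<and>
              cp G (fst p) (snd p) = f \<and> dg G (fst p) = m \<and> dg G (snd p) = n))"

definition vertices :: "('a, 'k) kgraph \<Rightarrow> 'a set" where
  "vertices G = {v \<in> Mor G. dg G v = 0}"

definition paths_between :: "('a, 'k) kgraph \<Rightarrow> 'a \<Rightarrow> 'a \<Rightarrow> 'a set" where
  "paths_between G v w = {f \<in> Mor G. rg G f = v \<and> sr G f = w}"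

definition row_finite :: "('a, 'k) kgraph \<Rightarrow> bool" where
  "row_finite G \<longleftrightarrow> (\<forall>v\<in>vertices G. \<forall>n. finite {f \<in> Mor G. rg G f = v \<and> dg G f = n})"

definition no_sources :: "('a, 'k) kgraph \<Rightarrow> bool" where
  "no_sources G \<longleftrightarrow> (\<forall>v\<in>vertices G. \<forall>n. {f \<in> Mor G. rg G f = v \<and> dg G f = n} \<noteq> {})"

definition automorphism :: "('a, 'k) kgraph \<Rightarrow> ('a \<Rightarrow> 'a) \<Rightarrow> bool" where
  "automorphism G \<phi> \<longleftrightarrow> bij_betw \<phi> (Mor G) (Mor G) \<and>
     (\<forall>f\<in>Mor G. dg G (\<phi> f) = dg G f \<and> rg G (\<phi> f) = \<phi> (rg G f) \<and> sr G (\<phi> f) = \<phi> (sr G f)) \<and>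
     (\<forall>f\<in>Mor G. \<forall>g\<in>Mor G. sr G f = rg G g \<longrightarrow> \<phi> (cp G f g) = cp G (\<phi> f) (\<phi> g))"

definition is_action :: "('a, 'k) kgraph \<Rightarrow> (('l \<Rightarrow> int) \<Rightarrow> 'a \<Rightarrow> 'a) \<Rightarrow> bool" where
  "is_action G \<alpha> \<longleftrightarrow> (\<forall>m. automorphism G (\<alpha> m)) \<and>
     (\<forall>f\<in>Mor G. \<alpha> 0 f = f) \<and>
     (\<forall>m n. \<forall>f\<in>Mor G. \<alpha> (m + n) f = \<alpha> m (\<alpha> n f))"

definition act_pos :: "(('l \<Rightarrow> int) \<Rightarrow> 'a \<Rightarrow> 'a) \<Rightarrow> ('l \<Rightarrow> nat) \<Rightarrow> 'a \<Rightarrow> 'a" where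
  "act_pos \<alpha> m = \<alpha> (\<lambda>i. int (m i))"

definition act_neg :: "(('l \<Rightarrow> int) \<Rightarrow> 'a \<Rightarrow> 'a) \<Rightarrow> ('l \<Rightarrow> nat) \<Rightarrow> 'a \<Rightarrow> 'a" where
  "act_neg \<alpha> m = \<alpha> (\<lambda>i. - int (m i))"

definition skew_product ::
  "('a, 'k) kgraph \<Rightarrow> (('l \<Rightarrow> int) \<Rightarrow> 'a \<Rightarrow> 'a) \<Rightarrow> ('a \<times> ('l \<Rightarrow> nat), 'k + 'l) kgraph" where
  "skew_product G \<alpha> =
     \<lparr> Mor = Mor G \<times> UNIV,
       rg = (\<lambda>(f, m). (rg G f, 0)),
       sr = (\<lambda>(f, m). (act_neg \<alpha> m (sr G f), 0)),
       cp = (\<lambda>(f, m) (g, n). (cp G f (act_pos \<alpha> m g), m + n)),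
       dg = (\<lambda>(f, m). case_sum (dg G f) m) \<rparr>"

text \<open>Infinite paths: degree-preserving functors Omega_j -> G, encoded as functions
 x a b (meaningful for a <= b), with x(n) = x n n.\<close>
definition inf_paths :: "('a, 'j) kgraph \<Rightarrow> (('j \<Rightarrow> nat) \<Rightarrow> ('j \<Rightarrow> nat) \<Rightarrow> 'a) set" where
  "inf_paths G = {x. (\<forall>a b. a \<le> b \<longrightarrow> x a b \<in> Mor G \<and> dg G (x a b) = b - a \<and>
                          rg G (x a b) = x a a \<and> sr G (x a b) = x b b) \<and>
                     (\<forall>a b c. a \<le> b \<longrightarrow> b \<le> c \<longrightarrow> cp G (x a b) (x b c) = x a c)}"

definition cofinal :: "('a, 'j) kgraph \<Rightarrow> bool" where
  "cofinal G \<longleftrightarrow> (\<forall>x\<in>inf_paths G. \<forall>v\<in>vertices G. \<exists>n. paths_between G v (x n n) \<noteq> {})"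

definition alpha_cofinal :: "('a, 'k) kgraph \<Rightarrow> (('l \<Rightarrow> int) \<Rightarrow> 'a \<Rightarrow> 'a) \<Rightarrow> bool" where
  "alpha_cofinal G \<alpha> \<longleftrightarrow> (\<forall>v\<in>vertices G. \<forall>x\<in>inf_paths G. \<exists>p. \<exists>m n :: 'l \<Rightarrow> nat.
      paths_between G (act_neg \<alpha> m v) (act_neg \<alpha> n (x p p)) \<noteq> {})"

end

theory Submission
  imports Defs
begin

text \<open>Write \<open>n = (n', n'')\<close> for \<open>n \<in> \<nat>\<^sup>k \<times> \<nat>\<^sup>l\<close>. A path \<open>(f, m)\<close> of the skew product from \<open>(v, 0)\<close>
 to \<open>(w, 0)\<close> is the same as a path \<open>\<alpha>_-m f\<close> of \<open>\<Lambda>\<close> from \<open>\<alpha>_-m v\<close> to \<open>w\<close>. An infinite path \<open>x\<close> of \<open>\<Lambda>\<close>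
 lifts to the infinite path \<open>(a, b) \<mapsto> (\<alpha>_-a'' x(a', b'), b'' - a'')\<close> of the skew product, whose
 vertex at \<open>n\<close> is \<open>\<alpha>_-n'' x(n')\<close>. Conversely an infinite path \<open>X\<close> of the skew product restricts
 along \<open>\<nat>\<^sup>k \<times> {0}\<close> to an infinite path \<open>y\<close> of \<open>\<Lambda>\<close>, and since morphisms of degree zero are
 vertices, \<open>X(p, n) = \<alpha>_-n y(p)\<close>. So both cofinality conditions ask for paths between the same
 vertices.\<close>

lemma skew_product_simps [simp]:
  "Mor (skew_product G \<alpha>) = Mor G \<times> UNIV"
  "rg (skew_product G \<alpha>) (f, m) = (rg G f, 0)"
  "sr (skew_product G \<alpha>) (f, m) = (act_neg \<alpha> m (sr G f), 0)"
  "cp (skew_product G \<alpha>) (f, m) (g, n) = (cp G f (act_pos \<alpha> m g), m + n)"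
  "dg (skew_product G \<alpha>) (f, m) = case_sum (dg G f) m"
  by (simp_all add: skew_product_def)

lemma case_sum_eq_iff: "case_sum a q = d \<longleftrightarrow> a = d \<circ> Inl \<and> q = d \<circ> Inr"
  by (metis case_sum_o_inj surjective_sum comp_def)

lemma case_sum_diff: "case_sum b r - case_sum a q = case_sum (b - a) (r - q)"
  by (simp add: fun_eq_iff split: sum.split)

lemma case_sum_mono: "a \<le> b \<Longrightarrow> q \<le> r \<Longrightarrow> case_sum a q \<le> case_sum b r"
  by (simp add: le_fun_def split: sum.split)

lemma comp_mono: "a \<le> b \<Longrightarrow> a \<circ> h \<le> b \<circ> h"
  by (simp add: le_fun_def)

lemma minus_comp: "(b - a) \<circ> h = (b \<circ> h) - (a \<circ> h)"
  by (simp add: fun_eq_iff)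

context
  fixes G :: "('a, 'k) kgraph" and \<alpha> :: "('l \<Rightarrow> int) \<Rightarrow> 'a \<Rightarrow> 'a"
  assumes action: "is_action G \<alpha>"
begin

lemma action_Mor: "f \<in> Mor G \<Longrightarrow> \<alpha> m f \<in> Mor G"
  using action unfolding is_action_def automorphism_def by (meson bij_betw_apply)

lemma action_dg: "f \<in> Mor G \<Longrightarrow> dg G (\<alpha> m f) = dg G f"
  and action_rg: "f \<in> Mor G \<Longrightarrow> rg G (\<alpha> m f) = \<alpha> m (rg G f)"
  and action_sr: "f \<in> Mor G \<Longrightarrow> sr G (\<alpha> m f) = \<alpha> m (sr G f)"
  using action unfolding is_action_def automorphism_def by simp_all

lemma action_cp:
  "f \<in> Mor G \<Longrightarrow> g \<in> Mor G \<Longrightarrow> sr G f = rg G g \<Longrightarrow> \<alpha> m (cp G f g) = cp G (\<alpha> m f) (\<alpha> m g)"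
  using action unfolding is_action_def automorphism_def by simp

lemma action_add: "f \<in> Mor G \<Longrightarrow> \<alpha> m (\<alpha> n f) = \<alpha> (m + n) f"
  and action_zero: "f \<in> Mor G \<Longrightarrow> \<alpha> 0 f = f"
  using action unfolding is_action_def by simp_all

lemma act_neg_act_neg: "f \<in> Mor G \<Longrightarrow> act_neg \<alpha> m (act_neg \<alpha> n f) = act_neg \<alpha> (m + n) f"
  by (simp add: act_neg_def action_add plus_fun_def add.commute)

lemma act_neg_zero: "f \<in> Mor G \<Longrightarrow> act_neg \<alpha> 0 f = f"
  using action_zero by (simp add: act_neg_def zero_fun_def)

lemma act_pos_act_neg:
  assumes "f \<in> Mor G" and "n \<le> m"
  shows "act_pos \<alpha> n (act_neg \<alpha> m f) = act_neg \<alpha> (m - n) f"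
proof -
  have "(\<lambda>i. int (n i)) + (\<lambda>i. - int (m i)) = (\<lambda>i. - int ((m - n) i))"
    using \<open>n \<le> m\<close> by (auto simp: le_fun_def of_nat_diff)
  then show ?thesis
    using assms(1) by (simp add: act_pos_def act_neg_def action_add)
qed

lemma act_neg_act_pos: "f \<in> Mor G \<Longrightarrow> act_neg \<alpha> m (act_pos \<alpha> m f) = f"
  using action_add action_zero by (simp add: act_pos_def act_neg_def plus_fun_def zero_fun_def)

end

section \<open>Paths in the skew product\<close>

lemma skew_product_vertices:
  "vertices (skew_product G \<alpha>) = {(v, 0) | v. v \<in> vertices G}"
  by (auto simp: vertices_def case_sum_eq_iff zero_fun_def comp_def)

lemma skew_product_paths_between_iff:
  assumes action: "is_action G \<alpha>" and cat: "is_category G" and v: "v \<in> Mor G"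
  shows "paths_between (skew_product G \<alpha>) (v, 0) (w, 0) \<noteq> {}
    \<longleftrightarrow> (\<exists>m. paths_between G (act_neg \<alpha> m v) w \<noteq> {})"
proof
  assume "paths_between (skew_product G \<alpha>) (v, 0) (w, 0) \<noteq> {}"
  then obtain f m where "f \<in> Mor G" "rg G f = v" "act_neg \<alpha> m (sr G f) = w"
    by (auto simp: paths_between_def)
  then have "act_neg \<alpha> m f \<in> paths_between G (act_neg \<alpha> m v) w"
    using action by (simp add: paths_between_def act_neg_def action_Mor action_rg action_sr)
  then show "\<exists>m. paths_between G (act_neg \<alpha> m v) w \<noteq> {}" by blast
next
  assume "\<exists>m. paths_between G (act_neg \<alpha> m v) w \<noteq> {}"
  then obtain m f where f: "f \<in> Mor G" "rg G f = act_neg \<alpha> m v" "sr G f = w"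
    by (auto simp: paths_between_def)
  have "sr G f \<in> Mor G" using cat f(1) unfolding is_category_def by blast
  then have "act_neg \<alpha> m (sr G (act_pos \<alpha> m f)) = w"
    using f action by (simp add: act_pos_def action_sr act_neg_act_pos[unfolded act_pos_def])
  moreover have "rg G (act_pos \<alpha> m f) = v"
    using f v action by (simp add: act_pos_def action_rg act_pos_act_neg[unfolded act_pos_def] act_neg_zero)
  ultimately have "(act_pos \<alpha> m f, m) \<in> paths_between (skew_product G \<alpha>) (v, 0) (w, 0)"
    using f action by (simp add: paths_between_def act_pos_def action_Mor)
  then show "paths_between (skew_product G \<alpha>) (v, 0) (w, 0) \<noteq> {}" by blast
qed

lemma kgraph_is_category: "is_kgraph G \<Longrightarrow> is_category G"
  by (simp add: is_kgraph_def)

lemma kgraph_dg_cp: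
  "is_kgraph G \<Longrightarrow> f \<in> Mor G \<Longrightarrow> g \<in> Mor G \<Longrightarrow> sr G f = rg G g \<Longrightarrow>
    dg G (cp G f g) = dg G f + dg G g"
  unfolding is_kgraph_def by blast

lemma kgraph_unique_factorisation:
  "is_kgraph G \<Longrightarrow> f \<in> Mor G \<Longrightarrow> dg G f = m + n \<Longrightarrow>
    \<exists>!p. fst p \<in> Mor G \<and> snd p \<in> Mor G \<and> sr G (fst p) = rg G (snd p) \<and>
      cp G (fst p) (snd p) = f \<and> dg G (fst p) = m \<and> dg G (snd p) = n"
  unfolding is_kgraph_def by blast

lemma kgraph_dg_identity:
  assumes kg: "is_kgraph G" and u: "u \<in> Mor G" and "rg G u = u"
  shows "dg G u = 0"
proof -
  have "sr G u = u" and "cp G u u = u"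
    using kgraph_is_category[OF kg] u \<open>rg G u = u\<close> unfolding is_category_def by metis+
  then have "dg G u = dg G u + dg G u"
    using kgraph_dg_cp[OF kg u u] \<open>rg G u = u\<close> by simp
  then show ?thesis by simp
qed

text \<open>Both \<open>(r(f), f)\<close> and \<open>(f, s(f))\<close> factorise \<open>f\<close> with degrees \<open>(0, 0)\<close>.\<close>

lemma kgraph_dg_zero_imp_identity:
  assumes kg: "is_kgraph G" and f: "f \<in> Mor G" and d: "dg G f = 0"
  shows "rg G f = f"
proof -
  have ids: "rg G f \<in> Mor G" "sr G f \<in> Mor G" "rg G (rg G f) = rg G f" "rg G (sr G f) = sr G f"
    "sr G (rg G f) = rg G f" "cp G (rg G f) f = f" "cp G f (sr G f) = f"
    using kgraph_is_category[OF kg] f unfolding is_category_def by auto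
  define factors where "factors p \<longleftrightarrow> fst p \<in> Mor G \<and> snd p \<in> Mor G \<and>
      sr G (fst p) = rg G (snd p) \<and> cp G (fst p) (snd p) = f \<and> dg G (fst p) = 0 \<and> dg G (snd p) = 0"
    for p
  have unique: "\<exists>!p. factors p"
    using kgraph_unique_factorisation[OF kg f, of 0 0] d unfolding factors_def by simp
  have "dg G (rg G f) = 0" "dg G (sr G f) = 0"
    using kgraph_dg_identity[OF kg] ids by simp_all
  then have "factors (rg G f, f)" "factors (f, sr G f)"
    using f ids d by (simp_all add: factors_def)
  then have "(rg G f, f) = (f, sr G f)"
    using unique by blast
  then show ?thesis by simp
qed

section \<open>Lifting and restricting infinite paths\<close>

definition lift_path ::
  "(('l \<Rightarrow> int) \<Rightarrow> 'a \<Rightarrow> 'a) \<Rightarrow> (('k \<Rightarrow> nat) \<Rightarrow> ('k \<Rightarrow> nat) \<Rightarrow> 'a)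
    \<Rightarrow> ('k + 'l \<Rightarrow> nat) \<Rightarrow> ('k + 'l \<Rightarrow> nat) \<Rightarrow> 'a \<times> ('l \<Rightarrow> nat)" where
  "lift_path \<alpha> x a b = (act_neg \<alpha> (a \<circ> Inr) (x (a \<circ> Inl) (b \<circ> Inl)), (b \<circ> Inr) - (a \<circ> Inr))"

lemma lift_path_in_inf_paths:
  fixes x :: "('k \<Rightarrow> nat) \<Rightarrow> ('k \<Rightarrow> nat) \<Rightarrow> 'a" and \<alpha> :: "('l \<Rightarrow> int) \<Rightarrow> 'a \<Rightarrow> 'a"
  assumes action: "is_action G \<alpha>" and x: "x \<in> inf_paths G"
  shows "lift_path \<alpha> x \<in> inf_paths (skew_product G \<alpha>)"
  unfolding inf_paths_def mem_Collect_eq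
proof (intro conjI allI impI)
  have xab: "x a b \<in> Mor G" "dg G (x a b) = b - a" "rg G (x a b) = x a a" "sr G (x a b) = x b b"
    if "a \<le> b" for a b
    using x that by (simp_all add: inf_paths_def)
  fix a b :: "'k + 'l \<Rightarrow> nat"
  assume ab: "a \<le> b"
  note x_ab = xab[OF comp_mono[OF ab, of Inl]]
  show "lift_path \<alpha> x a b \<in> Mor (skew_product G \<alpha>)"
    using x_ab action by (simp add: lift_path_def act_neg_def action_Mor)
  show "dg (skew_product G \<alpha>) (lift_path \<alpha> x a b) = b - a"
    using x_ab action by (simp add: lift_path_def act_neg_def action_dg case_sum_eq_iff minus_comp)
  show "rg (skew_product G \<alpha>) (lift_path \<alpha> x a b) = lift_path \<alpha> x a a"
    using x_ab action by (simp add: lift_path_def act_neg_def action_rg)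
  have "((b \<circ> Inr) - (a \<circ> Inr)) + (a \<circ> Inr) = (b \<circ> Inr)"
    using ab by (simp add: le_fun_def fun_eq_iff)
  moreover have "sr G (act_neg \<alpha> (a \<circ> Inr) (x (a \<circ> Inl) (b \<circ> Inl)))
      = act_neg \<alpha> (a \<circ> Inr) (x (b \<circ> Inl) (b \<circ> Inl))"
    using x_ab action by (simp add: act_neg_def action_sr)
  ultimately show "sr (skew_product G \<alpha>) (lift_path \<alpha> x a b) = lift_path \<alpha> x b b"
    using xab[of "b \<circ> Inl" "b \<circ> Inl"] act_neg_act_neg[OF action] by (simp add: lift_path_def)
next
  fix a b c :: "'k + 'l \<Rightarrow> nat"
  assume ab: "a \<le> b" and bc: "b \<le> c"
  have x_ab: "x (a \<circ> Inl) (b \<circ> Inl) \<in> Mor G" and x_bc: "x (b \<circ> Inl) (c \<circ> Inl) \<in> Mor G"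
    and match: "sr G (x (a \<circ> Inl) (b \<circ> Inl)) = rg G (x (b \<circ> Inl) (c \<circ> Inl))"
    and comp: "cp G (x (a \<circ> Inl) (b \<circ> Inl)) (x (b \<circ> Inl) (c \<circ> Inl)) = x (a \<circ> Inl) (c \<circ> Inl)"
    using x comp_mono[OF ab, of Inl] comp_mono[OF bc, of Inl] by (auto simp: inf_paths_def)
  have "act_pos \<alpha> ((b \<circ> Inr) - (a \<circ> Inr)) (act_neg \<alpha> (b \<circ> Inr) (x (b \<circ> Inl) (c \<circ> Inl)))
      = act_neg \<alpha> (a \<circ> Inr) (x (b \<circ> Inl) (c \<circ> Inl))"
  proof -
    have "(b \<circ> Inr) - ((b \<circ> Inr) - (a \<circ> Inr)) = (a \<circ> Inr)"
      using ab by (simp add: le_fun_def fun_eq_iff)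
    then show ?thesis
      using act_pos_act_neg[OF action x_bc, of "(b \<circ> Inr) - (a \<circ> Inr)"] ab by (simp add: le_fun_def)
  qed
  moreover have "((b \<circ> Inr) - (a \<circ> Inr)) + ((c \<circ> Inr) - (b \<circ> Inr)) = (c \<circ> Inr) - (a \<circ> Inr)"
    using ab bc by (simp add: le_fun_def fun_eq_iff)
  ultimately show "cp (skew_product G \<alpha>) (lift_path \<alpha> x a b) (lift_path \<alpha> x b c) = lift_path \<alpha> x a c"
    using action_cp[OF action x_ab x_bc match] comp by (simp add: lift_path_def act_neg_def)
qed

lemma lift_path_vertex: "lift_path \<alpha> x n n = (act_neg \<alpha> (n \<circ> Inr) (x (n \<circ> Inl) (n \<circ> Inl)), 0)"
  by (simp add: lift_path_def)

lemma skew_inf_path_segment: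
  assumes X: "X \<in> inf_paths (skew_product G \<alpha>)" and ab: "a \<le> b"
  shows "fst (X a b) \<in> Mor G" and "dg G (fst (X a b)) = (b - a) \<circ> Inl"
    and "snd (X a b) = (b - a) \<circ> Inr" and "X a a = (rg G (fst (X a b)), 0)"
    and "X b b = (act_neg \<alpha> (snd (X a b)) (sr G (fst (X a b))), 0)"
proof -
  obtain f m where fm: "X a b = (f, m)" by fastforce
  have "X a b \<in> Mor (skew_product G \<alpha>)" "dg (skew_product G \<alpha>) (X a b) = b - a"
    "rg (skew_product G \<alpha>) (X a b) = X a a" "sr (skew_product G \<alpha>) (X a b) = X b b"
    using X ab unfolding inf_paths_def by blast+
  then show "fst (X a b) \<in> Mor G" "dg G (fst (X a b)) = (b - a) \<circ> Inl"
    "snd (X a b) = (b - a) \<circ> Inr" "X a a = (rg G (fst (X a b)), 0)"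
    "X b b = (act_neg \<alpha> (snd (X a b)) (sr G (fst (X a b))), 0)"
    using fm by (simp_all add: case_sum_eq_iff)
qed

definition base_path ::
  "(('k + 'l \<Rightarrow> nat) \<Rightarrow> ('k + 'l \<Rightarrow> nat) \<Rightarrow> 'a \<times> ('l \<Rightarrow> nat)) \<Rightarrow> ('k \<Rightarrow> nat) \<Rightarrow> ('k \<Rightarrow> nat) \<Rightarrow> 'a"
  where "base_path X a b = fst (X (case_sum a 0) (case_sum b 0))"

lemma base_path_segment:
  fixes X :: "('k + 'l \<Rightarrow> nat) \<Rightarrow> ('k + 'l \<Rightarrow> nat) \<Rightarrow> 'a \<times> ('l \<Rightarrow> nat)"
  assumes action: "is_action G \<alpha>" and cat: "is_category G"
    and X: "X \<in> inf_paths (skew_product G \<alpha>)" and ab: "a \<le> b"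
  shows "base_path X a b \<in> Mor G" and "dg G (base_path X a b) = b - a"
    and "X (case_sum a 0) (case_sum b 0) = (base_path X a b, 0)"
    and "X (case_sum a 0) (case_sum a 0) = (rg G (base_path X a b), 0)"
    and "X (case_sum b 0) (case_sum b 0) = (sr G (base_path X a b), 0)"
proof -
  note seg = skew_inf_path_segment[OF X case_sum_mono[OF ab order_refl[of 0]],
      unfolded case_sum_diff case_sum_o_inj diff_self, folded base_path_def]
  have "sr G (base_path X a b) \<in> Mor G"
    using cat seg(1) unfolding is_category_def by blast
  then show "base_path X a b \<in> Mor G" "dg G (base_path X a b) = b - a"
    "X (case_sum a 0) (case_sum b 0) = (base_path X a b, 0)"
    "X (case_sum a 0) (case_sum a 0) = (rg G (base_path X a b), 0)"
    "X (case_sum b 0) (case_sum b 0) = (sr G (base_path X a b), 0)"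
    using seg act_neg_zero[OF action] by (auto simp: base_path_def prod_eq_iff)
qed

lemma base_path_in_inf_paths:
  fixes X :: "('k + 'l \<Rightarrow> nat) \<Rightarrow> ('k + 'l \<Rightarrow> nat) \<Rightarrow> 'a \<times> ('l \<Rightarrow> nat)"
  assumes action: "is_action G \<alpha>" and cat: "is_category G"
    and X: "X \<in> inf_paths (skew_product G \<alpha>)"
  shows "base_path X \<in> inf_paths G"
  unfolding inf_paths_def mem_Collect_eq
proof (intro conjI allI impI)
  note segment = base_path_segment[OF action cat X]
  fix a b :: "'k \<Rightarrow> nat"
  assume "a \<le> b"
  then show "base_path X a b \<in> Mor G" "dg G (base_path X a b) = b - a"
    "rg G (base_path X a b) = base_path X a a" "sr G (base_path X a b) = base_path X b b"
    using segment[of a b] segment[of a a] segment[of b b] by simp_all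
next
  note segment = base_path_segment[OF action cat X]
  fix a b c :: "'k \<Rightarrow> nat"
  assume ab: "a \<le> b" and bc: "b \<le> c"
  have "cp (skew_product G \<alpha>) (X (case_sum a 0) (case_sum b 0)) (X (case_sum b 0) (case_sum c 0))
      = X (case_sum a 0) (case_sum c 0)"
    using X case_sum_mono[OF ab order_refl] case_sum_mono[OF bc order_refl]
    unfolding inf_paths_def by blast
  then show "cp G (base_path X a b) (base_path X b c) = base_path X a c"
    using segment[OF ab] segment[OF bc] segment[OF order_trans[OF ab bc]] action_zero[OF action]
    by (simp add: act_pos_def zero_fun_def)
qed

text \<open>The segment from \<open>(p, 0)\<close> to \<open>(p, n)\<close> has degree \<open>(0, n)\<close>, so its first component is a vertex.\<close>

lemma skew_inf_path_vertex:
  assumes kg: "is_kgraph G" and action: "is_action G \<alpha>"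
    and X: "X \<in> inf_paths (skew_product G \<alpha>)"
  shows "X (case_sum p n) (case_sum p n) = (act_neg \<alpha> n (base_path X p p), 0)"
proof -
  note seg = skew_inf_path_segment[OF X case_sum_mono[OF order_refl zero_le[of n]]]
  define f where "f = fst (X (case_sum p 0) (case_sum p n))"
  have "dg G f = 0"
    using seg(2) by (simp add: f_def case_sum_diff case_sum_o_inj)
  then have "rg G f = f"
    using kgraph_dg_zero_imp_identity[OF kg seg(1)] by (simp add: f_def)
  then have "sr G f = f"
    using kgraph_is_category[OF kg] seg(1) unfolding is_category_def f_def by metis
  moreover have "base_path X p p = rg G f"
    using seg(4) by (simp add: base_path_def f_def)
  ultimately show ?thesis
    using seg(3,5) \<open>rg G f = f\<close> by (simp add: f_def case_sum_diff case_sum_o_inj)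
qed

lemma cofinal_skew_product_imp_alpha_cofinal:
  assumes action: "is_action G \<alpha>" and cat: "is_category G"
    and cofinal: "cofinal (skew_product G \<alpha>)"
  shows "alpha_cofinal G \<alpha>"
  unfolding alpha_cofinal_def
proof (intro ballI)
  fix v x
  assume v: "v \<in> vertices G" and x: "x \<in> inf_paths G"
  have "(v, 0) \<in> vertices (skew_product G \<alpha>)"
    using v by (simp add: skew_product_vertices)
  then obtain n where "paths_between (skew_product G \<alpha>) (v, 0) (lift_path \<alpha> x n n) \<noteq> {}"
    using cofinal lift_path_in_inf_paths[OF action x] unfolding cofinal_def by blast
  then obtain m where
    "paths_between G (act_neg \<alpha> m v) (act_neg \<alpha> (n \<circ> Inr) (x (n \<circ> Inl) (n \<circ> Inl))) \<noteq> {}"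
    using skew_product_paths_between_iff[OF action cat] v
    by (auto simp: lift_path_vertex vertices_def)
  then show "\<exists>p m n. paths_between G (act_neg \<alpha> m v) (act_neg \<alpha> n (x p p)) \<noteq> {}"
    by blast
qed

lemma alpha_cofinal_imp_cofinal_skew_product:
  assumes kg: "is_kgraph G" and action: "is_action G \<alpha>"
    and alpha_cofinal: "alpha_cofinal G \<alpha>"
  shows "cofinal (skew_product G \<alpha>)"
  unfolding cofinal_def
proof (intro ballI)
  fix X w
  assume X: "X \<in> inf_paths (skew_product G \<alpha>)" and w: "w \<in> vertices (skew_product G \<alpha>)"
  note cat = kgraph_is_category[OF kg]
  obtain v where w_eq: "w = (v, 0)" and v: "v \<in> vertices G"
    using w by (auto simp: skew_product_vertices)
  obtain p m n where "paths_between G (act_neg \<alpha> m v) (act_neg \<alpha> n (base_path X p p)) \<noteq> {}"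
    using alpha_cofinal v base_path_in_inf_paths[OF action cat X]
    unfolding alpha_cofinal_def by blast
  then have "paths_between (skew_product G \<alpha>) w (act_neg \<alpha> n (base_path X p p), 0) \<noteq> {}"
    using skew_product_paths_between_iff[OF action cat] v w_eq by (auto simp: vertices_def)
  then show "\<exists>q. paths_between (skew_product G \<alpha>) w (X q q) \<noteq> {}"
    using skew_inf_path_vertex[OF kg action X] by metis
qed

theorem lemma4p6:
  fixes G :: "('a, 'k::finite) kgraph"
    and \<alpha> :: "('l::finite \<Rightarrow> int) \<Rightarrow> 'a \<Rightarrow> 'a"
  assumes "is_kgraph G" and "row_finite G" and "no_sources G" and "is_action G \<alpha>"
  shows "alpha_cofinal G \<alpha> \<longleftrightarrow> cofinal (skew_product G \<alpha>)"
  using cofinal_skew_product_imp_alpha_cofinal[OF assms(4) kgraph_is_category[OF assms(1)]]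
    alpha_cofinal_imp_cofinal_skew_product[OF assms(1,4)] by blast

end
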